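(* Let $p>2$ and $p'=p/(p-1)$, and let $\delta_0>0$ be the constant of Lemma 4.1 (depending only on $p$). There exist constants $C>1$ and $r_0\in(0,1]$, depending only on $p$, such that: if $B_1\subset\mathbb{R}^2$, $f\in L^\infty(B_1)$ with $\|f\|_{L^\infty(B_1)}\le\delta_0$, and $u\in W^{1,p}(B_1)$ is a weak solution of $-\Delta_p u=f$ in $B_1$ with $\|u\|_{L^\infty(B_1)}\le1$, then for all $0<r\le r_0$, $$\sup_{x\in B_r}|u(x)-u(0)|\le C\,r^{p'}\left(1+|\nabla u(0)|\,r^{\frac{1}{1-p}}\right).$$
   Context: Lemma 4.1: there exist $\lambda_0\in(0,1/2)$ and $\delta_0>0$, depending only on $p$, such that for every weak solution $u\in W^{1,p}(B_1)$, $B_1\subset\mathbb{R}^2$, of $-\Delta_p u=f$ with $\|u\|_\infty\le1$ and $\|f\|_\infty\le\delta_0$ one has $\sup_{B_{\lambda_0}}|u(x)-u(0)-\nabla u(0)\cdot x|\le\lambda_0^{p'}$. Here $\Delta_p u=\operatorname{div}(|\nabla u|^{p-2}\nabla u)$ and $B_r$ is the open disk of radius $r$ centered at the origin. *)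

theory Defs
  imports "HOL-Analysis.Analysis"
begin

text \<open>Points of the plane are vectors of type real^2; integrals are Lebesgue/Henstock
integrals over subsets of the plane (for absolutely integrable functions they agree).\<close>

definition test_fun :: "(real^2) set \<Rightarrow> (real^2 \<Rightarrow> real) \<Rightarrow> (real^2 \<Rightarrow> real^2) \<Rightarrow> bool" where
  "test_fun U \<phi> D\<phi> \<longleftrightarrow>
     (\<forall>x. (\<phi> has_derivative (\<lambda>h. D\<phi> x \<bullet> h)) (at x)) \<and> continuous_on UNIV D\<phi> \<and>
     (\<exists>K. compact K \<and> K \<subseteq> U \<and> (\<forall>x. x \<notin> K \<longrightarrow> \<phi> x = 0))"

definition weak_gradient :: "(real^2) set \<Rightarrow> (real^2 \<Rightarrow> real) \<Rightarrow> (real^2 \<Rightarrow> real^2) \<Rightarrow> bool" where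
  "weak_gradient U u G \<longleftrightarrow>
     (\<forall>\<phi> D\<phi>. test_fun U \<phi> D\<phi> \<longrightarrow>
        (\<forall>i. integral U (\<lambda>x. u x * D\<phi> x $ i) = - integral U (\<lambda>x. G x $ i * \<phi> x)))"

definition sobolev_W1p :: "real \<Rightarrow> (real^2) set \<Rightarrow> (real^2 \<Rightarrow> real) \<Rightarrow> (real^2 \<Rightarrow> real^2) \<Rightarrow> bool" where
  "sobolev_W1p p U u G \<longleftrightarrow>
     u measurable_on U \<and> (\<lambda>x. \<bar>u x\<bar> powr p) integrable_on U \<and>
     G measurable_on U \<and> (\<lambda>x. norm (G x) powr p) integrable_on U \<and>
     weak_gradient U u G"

definition weak_sol_plap :: "real \<Rightarrow> (real^2) set \<Rightarrow> (real^2 \<Rightarrow> real) \<Rightarrow> (real^2 \<Rightarrow> real^2)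
    \<Rightarrow> (real^2 \<Rightarrow> real) \<Rightarrow> bool" where
  "weak_sol_plap p U u G f \<longleftrightarrow>
     sobolev_W1p p U u G \<and>
     (\<forall>\<phi> D\<phi>. test_fun U \<phi> D\<phi> \<longrightarrow>
        integral U (\<lambda>x. norm (G x) powr (p - 2) * (G x \<bullet> D\<phi> x)) = integral U (\<lambda>x. f x * \<phi> x))"

definition Linf_bound :: "(real^2) set \<Rightarrow> (real^2 \<Rightarrow> real) \<Rightarrow> real \<Rightarrow> bool" where
  "Linf_bound U f d \<longleftrightarrow> f measurable_on U \<and> negligible {x \<in> U. \<bar>f x\<bar> > d}"

text \<open>The conclusion of Lemma 4.1 for given constants lambda0, delta0.
 u is taken to be its continuous representative, and g0 is the gradient of u at 0.\<close>
definition lemma41_prop :: "real \<Rightarrow> real \<Rightarrow> real \<Rightarrow> bool" where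
  "lemma41_prop p lam0 \<delta>0 \<longleftrightarrow>
     (\<forall>u G f g0.
        weak_sol_plap p (ball 0 1) u G f \<and> continuous_on (ball 0 1) u \<and>
        (\<forall>x\<in>ball 0 1. \<bar>u x\<bar> \<le> 1) \<and> Linf_bound (ball 0 1) f \<delta>0 \<and>
        (u has_derivative (\<lambda>h. g0 \<bullet> h)) (at 0)
      \<longrightarrow> (\<forall>x\<in>ball 0 lam0. \<bar>u x - u 0 - g0 \<bullet> x\<bar> \<le> lam0 powr (p / (p - 1))))"

end

theory Submission
  imports Defs
begin

text \<open>The equation \<open>-\<Delta>\<^sub>p u = f\<close> is invariant under \<open>u \<mapsto> a (u(s\<cdot>) - c)\<close>,
  \<open>f \<mapsto> a\<^sup>p\<^sup>-\<^sup>1 s\<^sup>p f(s\<cdot>)\<close>. Write \<open>p' = p/(p-1)\<close>, let \<open>\<lambda>\<close> be the radius of Lemma 4.1 and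
  \<open>L = \<lambda>\<^sup>p\<^sup>' < \<lambda>\<close>. If \<open>|u - u(0)| \<le> N\<close> on the ball of radius \<open>s\<close> and \<open>s\<^sup>p\<^sup>' \<le> N\<close>, then
  \<open>v = (u(s\<cdot>) - u(0)) / N\<close> again satisfies the hypotheses of Lemma 4.1 (the condition
  \<open>s\<^sup>p\<^sup>' \<le> N\<close> keeps the new right-hand side below \<open>\<delta>\<^sub>0\<close>), and the lemma gives
  \<open>|u - u(0)| \<le> s\<lambda>|\<nabla>u(0)| + N L\<close> on the ball of radius \<open>\<lambda>s\<close>. Starting from \<open>N = 2\<close> and
  \<open>s = 1\<close>, induction gives \<open>|u - u(0)| \<le> 2L\<^sup>k + \<lambda>\<^sup>k |\<nabla>u(0)| \<lambda>/(\<lambda> - L)\<close> on the ball of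
  radius \<open>\<lambda>\<^sup>k\<close>, and for \<open>\<lambda>\<^sup>k\<^sup>+\<^sup>1 < r \<le> \<lambda>\<^sup>k\<close> this is at most
  \<open>(2/L) r\<^sup>p\<^sup>' + |\<nabla>u(0)| r/(\<lambda> - L)\<close>.\<close>

section \<open>Integration\<close>

lemma derivative_eq_0_outside:
  assumes "(\<phi> has_derivative (\<lambda>h. D \<bullet> h)) (at x)" "closed K" "\<And>y. y \<notin> K \<Longrightarrow> \<phi> y = 0" "x \<notin> K"
  shows "D = 0"
proof -
  have "((\<lambda>_. 0) has_derivative (\<lambda>h. 0)) (at x)"
    by simp
  then have "(\<phi> has_derivative (\<lambda>h. 0)) (at x)"
    by (rule has_derivative_transform_within_open[where s="- K"]) (use assms in auto)
  from has_derivative_unique[OF assms(1) this] show ?thesis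
    by (metis inner_eq_zero_iff)
qed

lemma has_integral_translate_bounded_support:
  fixes f :: "'a::euclidean_space \<Rightarrow> real"
  assumes "(f has_integral I) UNIV" "bounded {x. f x \<noteq> 0}"
  shows "((\<lambda>x. f (x + c)) has_integral I) UNIV"
proof -
  obtain a where a: "{x. f x \<noteq> 0} \<subseteq> cbox (- a) a"
    using bounded_subset_cbox_symmetric[OF assms(2)] by blast
  then have out: "f x = 0" if "x \<notin> cbox (- a) a" for x
    using that by blast
  have "(\<lambda>x. if x \<in> cbox (- a) a then f x else 0) = f"
    using out by auto
  then have "(f has_integral I) (cbox (- a) a)"
    using assms(1) has_integral_restrict_UNIV[of "cbox (- a) a" f] by simp
  from has_integral_affinity[OF this, of 1 c]
  have "((\<lambda>x. f (x + c)) has_integral I) ((\<lambda>x. x - c) ` cbox (- a) a)"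
    by simp
  then show ?thesis
  proof (rule has_integral_on_superset)
    show "f (x + c) = 0" if "x \<notin> (\<lambda>x. x - c) ` cbox (- a) a" for x
      using that out[of "x + c"] by (metis add_diff_cancel image_eqI)
  qed simp
qed

lemma integrable_continuous_compact_support:
  fixes f :: "'a::euclidean_space \<Rightarrow> real"
  assumes "continuous_on UNIV f" "compact K" "\<And>x. x \<notin> K \<Longrightarrow> f x = 0"
  shows "f integrable_on UNIV"
proof -
  obtain a where "K \<subseteq> cbox (- a) a"
    using bounded_subset_cbox_symmetric[OF compact_imp_bounded[OF assms(2)]] by blast
  with assms show ?thesis
    by (intro integrable_on_superset[OF integrable_continuous[of "- a" a]])
       (auto intro: continuous_on_subset)
qed

lemma difference_quotient_bounded:
  fixes \<phi> :: "'a::real_inner \<Rightarrow> real"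
  assumes D: "\<And>x. (\<phi> has_derivative (\<lambda>h. D\<phi> x \<bullet> h)) (at x)" and M: "\<And>x. norm (D\<phi> x) \<le> M"
    and t: "0 < t"
  shows "\<bar>(\<phi> (x + t *\<^sub>R e) - \<phi> x) / t\<bar> \<le> M * norm e"
proof -
  define g where "g \<tau> = \<phi> (x + \<tau> *\<^sub>R e)" for \<tau>
  have "(g has_real_derivative D\<phi> (x + \<tau> *\<^sub>R e) \<bullet> e) (at \<tau>)" for \<tau>
    unfolding g_def has_field_derivative_def
    by (rule has_derivative_eq_rhs[OF has_derivative_compose[OF _ D]])
       (auto intro!: derivative_eq_intros)
  then obtain z where "g t - g 0 = t * (D\<phi> (x + z *\<^sub>R e) \<bullet> e)"
    using MVT2[OF t, where f=g and f'="\<lambda>\<tau>. D\<phi> (x + \<tau> *\<^sub>R e) \<bullet> e"] by auto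
  then have "\<bar>(\<phi> (x + t *\<^sub>R e) - \<phi> x) / t\<bar> = \<bar>D\<phi> (x + z *\<^sub>R e) \<bullet> e\<bar>"
    using t by (simp add: g_def)
  also have "\<dots> \<le> M * norm e"
    by (rule order_trans[OF Cauchy_Schwarz_ineq2 mult_right_mono[OF M norm_ge_zero]])
  finally show ?thesis .
qed

lemma difference_quotient_LIMSEQ:
  fixes \<phi> :: "'a::real_inner \<Rightarrow> real"
  assumes "(\<phi> has_derivative (\<lambda>h. D \<bullet> h)) (at x)"
  shows "(\<lambda>n. (\<phi> (x + inverse (real (Suc n)) *\<^sub>R e) - \<phi> x) / inverse (real (Suc n))) \<longlonglongrightarrow> D \<bullet> e"
proof -
  have "((\<lambda>\<tau>. x + \<tau> *\<^sub>R e) has_derivative (\<lambda>\<tau>. \<tau> *\<^sub>R e)) (at 0)"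
    by (auto intro!: derivative_eq_intros)
  moreover have "(\<phi> has_derivative (\<lambda>h. D \<bullet> h)) (at (x + 0 *\<^sub>R e))"
    using assms by simp
  ultimately have "((\<lambda>\<tau>. \<phi> (x + \<tau> *\<^sub>R e)) has_derivative (\<lambda>\<tau>. D \<bullet> (\<tau> *\<^sub>R e))) (at 0)"
    by (rule has_derivative_compose)
  then have "((\<lambda>\<tau>. \<phi> (x + \<tau> *\<^sub>R e)) has_real_derivative D \<bullet> e) (at 0)"
    unfolding has_field_derivative_def by (rule has_derivative_eq_rhs) (auto simp: fun_eq_iff)
  then have "((\<lambda>\<tau>. (\<phi> (x + \<tau> *\<^sub>R e) - \<phi> x) / \<tau>) \<longlongrightarrow> D \<bullet> e) (at 0)"
    by (simp add: has_field_derivative_iff)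
  moreover have "filterlim (\<lambda>n. inverse (real (Suc n))) (at 0) sequentially"
    unfolding filterlim_at using LIMSEQ_inverse_real_of_nat by auto
  ultimately show ?thesis
    by (rule filterlim_compose)
qed

lemma has_integral_translation_difference:
  fixes \<phi> :: "'a::euclidean_space \<Rightarrow> real"
  assumes "continuous_on UNIV \<phi>" "compact K" "\<And>x. x \<notin> K \<Longrightarrow> \<phi> x = 0"
  shows "((\<lambda>x. \<phi> (x + c) - \<phi> x) has_integral 0) UNIV"
proof -
  have \<phi>_int: "(\<phi> has_integral integral UNIV \<phi>) UNIV"
    using integrable_continuous_compact_support[OF assms] by blast
  have "bounded {x. \<phi> x \<noteq> 0}"
    by (rule bounded_subset[OF compact_imp_bounded[OF assms(2)]]) (use assms(3) in blast)
  from has_integral_diff[OF has_integral_translate_bounded_support[OF \<phi>_int this] \<phi>_int]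
  show ?thesis
    by simp
qed

text \<open>The difference quotients of \<open>\<phi>\<close> in direction \<open>e\<close> have integral zero by translation
  invariance, and converge boundedly to \<open>D\<phi> x \<bullet> e\<close>.\<close>
lemma integral_derivative_compact_support_eq_0:
  fixes \<phi> :: "'a::euclidean_space \<Rightarrow> real"
  assumes D: "\<And>x. (\<phi> has_derivative (\<lambda>h. D\<phi> x \<bullet> h)) (at x)" and cD: "continuous_on UNIV D\<phi>"
    and K: "compact K" "\<And>x. x \<notin> K \<Longrightarrow> \<phi> x = 0"
  shows "integral UNIV (\<lambda>x. D\<phi> x \<bullet> e) = 0"
proof -
  have DK: "D\<phi> x = 0" if "x \<notin> K" for x
    using derivative_eq_0_outside[OF D compact_imp_closed[OF K(1)] K(2) that] .
  obtain R where R: "\<And>x. x \<in> K \<Longrightarrow> norm x \<le> R"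
    using compact_imp_bounded[OF K(1)] by (auto simp: bounded_iff)
  obtain M where "\<And>x. x \<in> K \<Longrightarrow> norm (D\<phi> x) \<le> M"
    using compact_imp_bounded[OF compact_continuous_image[OF continuous_on_subset[OF cD] K(1)]]
    by (auto simp: bounded_iff)
  with DK have M: "norm (D\<phi> x) \<le> max 0 M" for x
    by (cases "x \<in> K") (auto simp: le_max_iff_disj)
  have c\<phi>: "continuous_on UNIV \<phi>"
    using D by (auto intro: continuous_at_imp_continuous_on has_derivative_continuous)
  define S where "S = cball (0::'a) (R + norm e)"
  define t :: "nat \<Rightarrow> real" where "t n = inverse (real (Suc n))" for n
  have t: "0 < t n" "t n \<le> 1" for n
    by (auto simp: t_def inverse_le_1_iff)
  define q where "q n x = (\<phi> (x + t n *\<^sub>R e) - \<phi> x) / t n" for n x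
  have q_out: "q n x = 0" if "x \<notin> S" for n x
  proof -
    have "norm x - t n * norm e \<le> norm (x + t n *\<^sub>R e)" "t n * norm e \<le> norm e"
      using norm_triangle_ineq2[of x "- (t n *\<^sub>R e)"] t[of n] by (simp_all add: mult_left_le_one_le)
    then have "x + t n *\<^sub>R e \<notin> K" "x \<notin> K"
      using that R[of x] R[of "x + t n *\<^sub>R e"] norm_ge_zero[of e] by (auto simp: S_def)
    then show ?thesis
      by (simp add: q_def K(2))
  qed
  define h where "h x = (if x \<in> S then max 0 M * norm e else 0)" for x
  have q_bound: "norm (q n x) \<le> h x" for n x
  proof (cases "x \<in> S")
    case True
    then show ?thesis
      using difference_quotient_bounded[OF D M t(1)] by (simp add: q_def h_def)
  qed (simp add: q_out h_def)
  have h_int: "h integrable_on UNIV"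
    unfolding h_def integrable_restrict_UNIV S_def by (rule integrable_on_const[OF lmeasurable_cball])
  have q_lim: "(\<lambda>n. q n x) \<longlonglongrightarrow> D\<phi> x \<bullet> e" for x
    unfolding q_def t_def by (rule difference_quotient_LIMSEQ[OF D])
  have q_int: "(q n has_integral 0) UNIV" for n
    using has_integral_divide[OF has_integral_translation_difference[OF c\<phi> K, where c="t n *\<^sub>R e"],
        where c="t n"]
    by (simp add: q_def[abs_def])
  have "(\<lambda>n. integral UNIV (q n)) \<longlonglongrightarrow> integral UNIV (\<lambda>x. D\<phi> x \<bullet> e)"
    by (rule dominated_convergence(2)[OF has_integral_integrable[OF q_int] h_int q_bound q_lim])
  then have "(\<lambda>n. 0) \<longlonglongrightarrow> integral UNIV (\<lambda>x. D\<phi> x \<bullet> e)"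
    using integral_unique[OF q_int] by simp
  then show ?thesis
    by (simp add: LIMSEQ_const_iff)
qed

lemma absolutely_integrable_on_bounded_continuous:
  fixes h :: "'a::euclidean_space \<Rightarrow> real"
  assumes "continuous_on S h" "S \<in> lmeasurable" "\<And>x. x \<in> S \<Longrightarrow> \<bar>h x\<bar> \<le> M"
  shows "h absolutely_integrable_on S"
  using assms continuous_imp_measurable_on_sets_lebesgue integrable_on_const fmeasurableD
  by (intro measurable_bounded_by_integrable_imp_absolutely_integrable[where g="\<lambda>_. M"]) auto

lemma absolutely_integrable_on_ae_bounded:
  fixes h :: "'a::euclidean_space \<Rightarrow> 'b::euclidean_space"
  assumes hm: "h measurable_on S" and S: "S \<in> sets lebesgue" and N: "negligible N"
    and g: "g integrable_on S" and bnd: "\<And>x. x \<in> S - N \<Longrightarrow> norm (h x) \<le> g x"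
    and g0: "\<And>x. x \<in> S \<Longrightarrow> 0 \<le> g x"
  shows "h absolutely_integrable_on S"
proof -
  define h0 where "h0 x = (if x \<in> N then 0 else h x)" for x
  have "h0 measurable_on S"
    by (rule measurable_on_spike[OF hm N]) (simp add: h0_def)
  then have "h0 \<in> borel_measurable (lebesgue_on S)"
    using measurable_on_iff_borel_measurable[OF S] by blast
  then have "h0 absolutely_integrable_on S"
    by (rule measurable_bounded_by_integrable_imp_absolutely_integrable[OF _ S g])
       (use bnd g0 in \<open>auto simp: h0_def\<close>)
  then show ?thesis
    by (rule absolutely_integrable_spike[OF _ N]) (simp add: h0_def)
qed

lemma absolutely_integrable_imp_measurable_on:
  fixes f :: "'a::euclidean_space \<Rightarrow> 'b::euclidean_space"
  assumes "f absolutely_integrable_on S" "S \<in> sets lebesgue"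
  shows "f measurable_on S"
  using assms by (simp add: measurable_on_iff_borel_measurable absolutely_integrable_on_def integrable_imp_measurable)

lemma powr_le_1_plus_powr:
  fixes y :: real
  assumes "0 \<le> y" "0 \<le> q" "q \<le> p"
  shows "y powr q \<le> 1 + y powr p"
proof (cases "y \<le> 1")
  case True
  then have "y powr q \<le> 1"
    using assms by (intro powr_le1) auto
  then show ?thesis
    by (simp add: add_increasing2)
next
  case False
  then have "y powr q \<le> y powr p"
    using assms by (intro powr_mono) auto
  then show ?thesis
    by simp
qed

lemma absolutely_integrable_powr_dominated:
  fixes F :: "'a::euclidean_space \<Rightarrow> 'b::euclidean_space"
  assumes "F measurable_on U" "U \<in> lmeasurable" "(\<lambda>x. norm (G x) powr p) integrable_on U"
    and "\<And>x. x \<in> U \<Longrightarrow> norm (F x) \<le> norm (G x) powr q" "0 \<le> q" "q \<le> p"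
  shows "F absolutely_integrable_on U"
proof -
  have "F \<in> borel_measurable (lebesgue_on U)"
    using assms(1,2) measurable_on_iff_borel_measurable fmeasurableD by blast
  moreover have "(\<lambda>x. 1 + norm (G x) powr p) integrable_on U"
    using assms(2,3) by (intro integrable_add integrable_on_const) auto
  ultimately show ?thesis
    using assms(2,4-6) powr_le_1_plus_powr[OF norm_ge_zero, of q p]
    by (intro measurable_bounded_by_integrable_imp_absolutely_integrable[where g="\<lambda>x. 1 + norm (G x) powr p"])
       (auto intro: order_trans fmeasurableD)
qed

lemma absolutely_integrable_dilate_ball:
  fixes h :: "real^'n::{finite,wellorder} \<Rightarrow> real^'m"
  assumes "0 < s" "h absolutely_integrable_on ball 0 s"
  shows "(\<lambda>x. h (s *\<^sub>R x)) absolutely_integrable_on ball 0 1"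
    and "integral (ball 0 1) (\<lambda>x. h (s *\<^sub>R x)) = integral (ball 0 s) h /\<^sub>R s ^ CARD('n)"
proof -
  have lin: "linear ((*\<^sub>R) s :: real^'n::{finite,wellorder} \<Rightarrow> _)"
    by (simp add: linear_scale_self)
  have img: "(*\<^sub>R) s ` ball 0 1 = ball (0::real^'n::{finite,wellorder}) s"
    using ball_scale[of s 0 1] assms(1) by simp
  have det: "det (matrix ((*\<^sub>R) s :: real^'n::{finite,wellorder} \<Rightarrow> _)) = s ^ CARD('n)"
    by (rule det_matrix_scaleR)
  show "(\<lambda>x. h (s *\<^sub>R x)) absolutely_integrable_on ball 0 1"
    using absolutely_integrable_on_linear_image[OF lin, where f=h and S="ball 0 1"] assms det
    by (simp add: img o_def)
  have "integral (ball 0 s) h = s ^ CARD('n) *\<^sub>R integral (ball 0 1) (\<lambda>x. h (s *\<^sub>R x))"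
    using integral_change_of_variables_linear[OF lin, where f=h and S="ball 0 1"] assms det
    by (simp add: img o_def)
  then show "integral (ball 0 1) (\<lambda>x. h (s *\<^sub>R x)) = integral (ball 0 s) h /\<^sub>R s ^ CARD('n)"
    using assms(1) by simp
qed

lemma absolutely_integrable_dilate_ball_real:
  fixes h :: "real^'n::{finite,wellorder} \<Rightarrow> real"
  assumes "0 < s" "h absolutely_integrable_on ball 0 s"
  shows "(\<lambda>x. h (s *\<^sub>R x)) absolutely_integrable_on ball 0 1"
    and "integral (ball 0 1) (\<lambda>x. h (s *\<^sub>R x)) = integral (ball 0 s) h / s ^ CARD('n)"
proof -
  have "(\<lambda>y. vec (h y) :: real^1) absolutely_integrable_on ball 0 s"
    using assms(2) by (simp add: absolutely_integrable_on_1_iff)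
  note dil = absolutely_integrable_dilate_ball[OF assms(1) this]
  show "(\<lambda>x. h (s *\<^sub>R x)) absolutely_integrable_on ball 0 1"
    using dil(1) by (simp add: absolutely_integrable_on_1_iff)
  show "integral (ball 0 1) (\<lambda>x. h (s *\<^sub>R x)) = integral (ball 0 s) h / s ^ CARD('n)"
    using arg_cong[OF dil(2), of "\<lambda>v. v $ 1"] by (simp add: integral_on_1_eq divide_inverse_commute)
qed

lemma integral_dilate_ball_vanishing:
  fixes h :: "real^'n::{finite,wellorder} \<Rightarrow> real"
  assumes s: "0 < s" "s \<le> 1" and h: "h absolutely_integrable_on ball 0 1"
    and out: "\<And>y. s \<le> norm y \<Longrightarrow> h y = 0"
  shows "integral (ball 0 1) (\<lambda>x. h (s *\<^sub>R x)) = integral (ball 0 1) h / s ^ CARD('n)"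
proof -
  have sub: "ball (0::real^'n::{finite,wellorder}) s \<subseteq> ball 0 1"
    using s by (intro subset_ball)
  have "(\<lambda>x. if x \<in> ball 0 s then h x else 0) = h"
    using out by (auto simp: fun_eq_iff)
  then have "integral (ball 0 s) h = integral (ball 0 1) h"
    using integral_restrict_Int[of "ball 0 1" "ball 0 s" h] sub by (simp add: Int_absorb2)
  moreover have "h absolutely_integrable_on ball 0 s"
    using set_integrable_subset[OF h _ sub] by simp
  ultimately show ?thesis
    using absolutely_integrable_dilate_ball_real(2)[OF s(1), of h] by simp
qed

lemma scaleR_mem_ball:
  fixes x :: "'a::real_normed_vector"
  assumes "x \<in> ball 0 r" "0 \<le> s" "s \<le> 1"
  shows "s *\<^sub>R x \<in> ball 0 r"
  using assms mult_left_le_one_le[of "norm x" s] by auto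

section \<open>Test functions\<close>

lemma test_fun_bounded:
  assumes "test_fun U \<phi> D\<phi>"
  obtains K M where "compact K" "K \<subseteq> U" "\<And>x. x \<notin> K \<Longrightarrow> \<phi> x = 0 \<and> D\<phi> x = 0"
    "\<And>x. norm (D\<phi> x) \<le> M" "\<And>x. \<bar>\<phi> x\<bar> \<le> M"
    "continuous_on UNIV \<phi>" "continuous_on UNIV D\<phi>"
proof -
  obtain K where K: "compact K" "K \<subseteq> U" "\<And>x. x \<notin> K \<Longrightarrow> \<phi> x = 0"
    using assms unfolding test_fun_def by blast
  have cD: "continuous_on UNIV D\<phi>" and c\<phi>: "continuous_on UNIV \<phi>"
    using assms unfolding test_fun_def
    by (auto intro: continuous_at_imp_continuous_on has_derivative_continuous)
  have D: "(\<phi> has_derivative (\<lambda>h. D\<phi> x \<bullet> h)) (at x)" for x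
    using assms unfolding test_fun_def by blast
  have DK: "D\<phi> x = 0" if "x \<notin> K" for x
    using derivative_eq_0_outside[OF D compact_imp_closed[OF K(1)] K(3) that] .
  obtain M1 where M1: "\<And>x. x \<in> K \<Longrightarrow> norm (D\<phi> x) \<le> M1"
    using compact_imp_bounded[OF compact_continuous_image[OF continuous_on_subset[OF cD] K(1)]]
    by (auto simp: bounded_iff)
  obtain M2 where M2: "\<And>x. x \<in> K \<Longrightarrow> \<bar>\<phi> x\<bar> \<le> M2"
    using compact_imp_bounded[OF compact_continuous_image[OF continuous_on_subset[OF c\<phi>] K(1)]]
    by (auto simp: bounded_iff)
  have "norm (D\<phi> x) \<le> max 0 (max M1 M2)" for x
    using M1[of x] DK[of x] by (cases "x \<in> K") auto
  moreover have "\<bar>\<phi> x\<bar> \<le> max 0 (max M1 M2)" for x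
    using M2[of x] K(3)[of x] by (cases "x \<in> K") auto
  ultimately show ?thesis using that K DK c\<phi> cD by blast
qed

lemma test_fun_ball_vanishes_outside:
  assumes "test_fun (ball 0 1) \<phi> D\<phi>" "1 \<le> norm x"
  shows "\<phi> x = 0" "D\<phi> x = 0"
proof -
  obtain K where "K \<subseteq> ball 0 1" "\<And>x. x \<notin> K \<Longrightarrow> \<phi> x = 0 \<and> D\<phi> x = 0"
    using test_fun_bounded[OF assms(1)] by metis
  with assms(2) show "\<phi> x = 0" "D\<phi> x = 0" by fastforce+
qed

lemma test_fun_integral_partial_eq_0:
  assumes "test_fun U \<phi> D\<phi>"
  shows "integral U (\<lambda>x. D\<phi> x $ i) = 0"
proof -
  obtain K where K: "compact K" "K \<subseteq> U" "\<And>x. x \<notin> K \<Longrightarrow> \<phi> x = 0 \<and> D\<phi> x = 0"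
    and cD: "continuous_on UNIV D\<phi>"
    using test_fun_bounded[OF assms] by metis
  have D: "(\<phi> has_derivative (\<lambda>h. D\<phi> x \<bullet> h)) (at x)" for x
    using assms unfolding test_fun_def by blast
  have "D\<phi> x = 0" if "x \<notin> U" for x
    using K(2) K(3)[of x] that by blast
  moreover have "y \<bullet> axis i 1 = y $ i" for y :: "real^2"
    by (simp add: inner_axis)
  ultimately have "(\<lambda>x. if x \<in> U then D\<phi> x $ i else 0) = (\<lambda>x. D\<phi> x \<bullet> axis i 1)"
    by auto
  then have "integral U (\<lambda>x. D\<phi> x $ i) = integral UNIV (\<lambda>x. D\<phi> x \<bullet> axis i 1)"
    using integral_restrict_UNIV[of U "\<lambda>x. D\<phi> x $ i"] by simp
  also have "\<dots> = 0"
    by (rule integral_derivative_compact_support_eq_0[OF D cD K(1)]) (use K(3) in blast)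
  finally show ?thesis .
qed

lemma test_fun_mult_absolutely_integrable:
  fixes g :: "real^2 \<Rightarrow> real"
  assumes "test_fun U \<phi> D\<phi>" "g absolutely_integrable_on S" "S \<in> sets lebesgue"
  shows "(\<lambda>x. \<phi> x * g x) absolutely_integrable_on S"
proof -
  obtain M where M: "\<And>x. \<bar>\<phi> x\<bar> \<le> M" and c: "continuous_on UNIV \<phi>"
    using test_fun_bounded[OF assms(1)] by metis
  have "\<phi> \<in> borel_measurable (lebesgue_on S)"
    using c assms(3) by (blast intro: continuous_imp_measurable_on_sets_lebesgue continuous_on_subset)
  moreover have "bounded (\<phi> ` S)"
    using M by (auto simp: bounded_iff)
  ultimately show ?thesis
    using absolutely_integrable_bounded_measurable_product[OF bilinear_times] assms(2,3) by blast
qed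

lemma test_fun_gradient_inner_absolutely_integrable:
  fixes F :: "real^2 \<Rightarrow> real^2"
  assumes "test_fun U \<phi> D\<phi>" "F absolutely_integrable_on S" "S \<in> sets lebesgue"
  shows "(\<lambda>x. D\<phi> x \<bullet> F x) absolutely_integrable_on S"
proof -
  obtain M where M: "\<And>x. norm (D\<phi> x) \<le> M" and cD: "continuous_on UNIV D\<phi>"
    using test_fun_bounded[OF assms(1)] by metis
  have "bilinear ((\<bullet>) :: real^2 \<Rightarrow> real^2 \<Rightarrow> real)"
    by (simp add: bilinear_conv_bounded_bilinear bounded_bilinear_inner)
  moreover have "D\<phi> \<in> borel_measurable (lebesgue_on S)"
    using cD assms(3) by (blast intro: continuous_imp_measurable_on_sets_lebesgue continuous_on_subset)
  moreover have "bounded (D\<phi> ` S)"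
    using M by (auto simp: bounded_iff)
  ultimately show ?thesis
    using absolutely_integrable_bounded_measurable_product assms(2,3) by blast
qed

lemma test_fun_dilate:
  assumes T: "test_fun (ball 0 1) \<psi> D\<psi>" and s: "0 < s" "s \<le> 1"
  shows "test_fun (ball 0 1) (\<lambda>y. \<psi> (y /\<^sub>R s)) (\<lambda>y. D\<psi> (y /\<^sub>R s) /\<^sub>R s)"
proof -
  obtain K where K: "compact K" "K \<subseteq> ball 0 1" "\<And>x. x \<notin> K \<Longrightarrow> \<psi> x = 0 \<and> D\<psi> x = 0"
    and cD: "continuous_on UNIV D\<psi>"
    using test_fun_bounded[OF T] by metis
  have D: "(\<psi> has_derivative (\<lambda>h. D\<psi> x \<bullet> h)) (at x)" for x
    using T unfolding test_fun_def by blast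
  have "((\<lambda>y. \<psi> (y /\<^sub>R s)) has_derivative (\<lambda>h. (D\<psi> (y /\<^sub>R s) /\<^sub>R s) \<bullet> h)) (at y)" for y
    by (rule has_derivative_eq_rhs[OF has_derivative_compose[OF _ D]])
       (auto intro!: derivative_eq_intros)
  moreover have "continuous_on UNIV (\<lambda>y. D\<psi> (y /\<^sub>R s) /\<^sub>R s)"
    by (intro continuous_intros continuous_on_compose2[OF cD]) auto
  moreover have "s * norm x < 1" if "x \<in> K" for x
    using subsetD[OF K(2) that] s mult_left_le_one_le[of "norm x" s] by auto
  then have "compact ((*\<^sub>R) s ` K)" "(*\<^sub>R) s ` K \<subseteq> ball 0 1"
    using K(1) s by (auto intro: compact_scaling)
  moreover have "\<psi> (y /\<^sub>R s) = 0" if "y \<notin> (*\<^sub>R) s ` K" for y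
    using K(3)[of "y /\<^sub>R s"] that s by (metis divideR_right image_eqI less_irrefl)
  ultimately show ?thesis
    unfolding test_fun_def by blast
qed

lemma test_fun_dilate_vanishes_outside:
  assumes "test_fun (ball 0 1) \<psi> D\<psi>" "0 < s" "s \<le> norm y"
  shows "\<psi> (y /\<^sub>R s) = 0 \<and> D\<psi> (y /\<^sub>R s) = 0"
proof -
  have "1 \<le> norm (y /\<^sub>R s)"
    using assms(2,3) by (simp add: field_simps)
  then show ?thesis
    using test_fun_ball_vanishes_outside[OF assms(1)] by simp
qed

section \<open>Rescaling weak solutions\<close>

lemma Linf_bound_absolutely_integrable:
  assumes "Linf_bound U f d" "U \<in> lmeasurable"
  shows "f absolutely_integrable_on U"
  using assms unfolding Linf_bound_def
  by (intro absolutely_integrable_on_ae_bounded[where g="\<lambda>_. \<bar>d\<bar>" and N="{x \<in> U. \<bar>f x\<bar> > d}"])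
     (auto simp: fmeasurableD integrable_on_const)

lemma Linf_bound_dilate_mult:
  assumes fb: "Linf_bound (ball 0 1) f d" and s: "0 < s" "s \<le> 1" and k: "\<bar>k\<bar> \<le> 1"
  shows "Linf_bound (ball 0 1) (\<lambda>x. k * f (s *\<^sub>R x)) d"
proof -
  let ?E = "{x \<in> ball 0 1. d < \<bar>f x\<bar>}"
  have fA: "f absolutely_integrable_on ball 0 1"
    by (rule Linf_bound_absolutely_integrable[OF fb]) simp
  have "f absolutely_integrable_on ball 0 s"
    by (rule set_integrable_subset[OF fA]) (use s in \<open>auto intro: subset_ball\<close>)
  from absolutely_integrable_dilate_ball_real(1)[OF s(1) this]
  have "(\<lambda>x. k * f (s *\<^sub>R x)) measurable_on ball 0 1"
    by (intro measurable_on_cmul absolutely_integrable_imp_measurable_on) auto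
  moreover have "negligible ((\<lambda>y. y /\<^sub>R s) ` ?E)"
    using fb unfolding Linf_bound_def
    by (intro negligible_differentiable_image_negligible[OF order_refl] linear_imp_differentiable_on
          linear_scale_self) auto
  moreover have "{x \<in> ball 0 1. d < \<bar>k * f (s *\<^sub>R x)\<bar>} \<subseteq> (\<lambda>y. y /\<^sub>R s) ` ?E"
  proof
    fix x
    assume x: "x \<in> {x \<in> ball 0 1. d < \<bar>k * f (s *\<^sub>R x)\<bar>}"
    have "\<bar>k * f (s *\<^sub>R x)\<bar> \<le> \<bar>f (s *\<^sub>R x)\<bar>"
      using k by (simp add: abs_mult mult_left_le_one_le)
    moreover have "s *\<^sub>R x \<in> ball 0 1"
      using x s by (intro scaleR_mem_ball) auto
    ultimately have "s *\<^sub>R x \<in> ?E"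
      using x by auto
    moreover have "x = (s *\<^sub>R x) /\<^sub>R s"
      using s by simp
    ultimately show "x \<in> (\<lambda>y. y /\<^sub>R s) ` ?E"
      by blast
  qed
  ultimately show ?thesis
    unfolding Linf_bound_def by (blast intro: negligible_subset)
qed

definition weak_plap_eq :: "real \<Rightarrow> (real^2) set \<Rightarrow> (real^2 \<Rightarrow> real^2) \<Rightarrow> (real^2 \<Rightarrow> real) \<Rightarrow> bool" where
  "weak_plap_eq p U G f \<longleftrightarrow>
     (\<forall>\<phi> D\<phi>. test_fun U \<phi> D\<phi> \<longrightarrow>
        integral U (\<lambda>x. norm (G x) powr (p - 2) * (G x \<bullet> D\<phi> x)) = integral U (\<lambda>x. f x * \<phi> x))"

lemma weak_sol_plap_iff: "weak_sol_plap p U u G f \<longleftrightarrow> sobolev_W1p p U u G \<and> weak_plap_eq p U G f"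
  unfolding weak_sol_plap_def weak_plap_eq_def ..

lemma sobolev_W1p_of_continuous_bounded:
  assumes "continuous_on (ball 0 1) u" "\<And>x. x \<in> ball 0 1 \<Longrightarrow> \<bar>u x\<bar> \<le> M" "0 < p"
    and "G measurable_on ball 0 1" "(\<lambda>x. norm (G x) powr p) integrable_on ball 0 1"
    and "weak_gradient (ball 0 1) u G"
  shows "sobolev_W1p p (ball 0 1) u G"
proof -
  have "u measurable_on ball 0 1"
    using continuous_imp_measurable_on_sets_lebesgue[OF assms(1)] measurable_on_iff_borel_measurable
    by (metis lmeasurable_ball fmeasurableD)
  moreover have "(\<lambda>x. \<bar>u x\<bar> powr p) absolutely_integrable_on ball 0 1"
  proof (rule absolutely_integrable_on_bounded_continuous[where M="M powr p"])
    show "continuous_on (ball 0 1) (\<lambda>x. \<bar>u x\<bar> powr p)"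
      using assms(1,3) by (intro continuous_on_powr' continuous_intros) auto
    show "\<bar>\<bar>u x\<bar> powr p\<bar> \<le> M powr p" if "x \<in> ball 0 1" for x
      using assms(2)[OF that] assms(3) by (simp add: powr_mono2)
  qed simp
  ultimately show ?thesis
    using assms(4-6) unfolding sobolev_W1p_def absolutely_integrable_on_def by blast
qed

lemma sobolev_W1p_gradient_powr_absolutely_integrable:
  fixes F :: "real^2 \<Rightarrow> 'b::euclidean_space"
  assumes "sobolev_W1p p (ball 0 1) u G" "F measurable_on ball 0 1"
    and "\<And>x. x \<in> ball 0 1 \<Longrightarrow> norm (F x) \<le> norm (G x) powr q" "0 \<le> q" "q \<le> p"
  shows "F absolutely_integrable_on ball 0 1"
  using assms unfolding sobolev_W1p_def
  by (intro absolutely_integrable_powr_dominated[where G=G and p=p and q=q]) auto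

lemma sobolev_W1p_flux_absolutely_integrable:
  assumes S: "sobolev_W1p p (ball 0 1) u G" and p: "1 \<le> p"
  shows "(\<lambda>x. norm (G x) powr (p - 2) *\<^sub>R G x) absolutely_integrable_on ball 0 1"
proof (rule sobolev_W1p_gradient_powr_absolutely_integrable[OF S])
  have "G measurable_on ball 0 1"
    using S unfolding sobolev_W1p_def by blast
  then have [measurable]: "G \<in> borel_measurable (lebesgue_on (ball 0 1))"
    using measurable_on_iff_borel_measurable[OF fmeasurableD[OF lmeasurable_ball]] by blast
  have "(\<lambda>x. norm (G x) powr (p - 2) *\<^sub>R G x) \<in> borel_measurable (lebesgue_on (ball 0 1))"
    by measurable
  then show "(\<lambda>x. norm (G x) powr (p - 2) *\<^sub>R G x) measurable_on ball 0 1"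
    using measurable_on_iff_borel_measurable[OF fmeasurableD[OF lmeasurable_ball]] by blast
  show "norm (norm (G x) powr (p - 2) *\<^sub>R G x) \<le> norm (G x) powr (p - 1)" for x
  proof (cases "G x = 0")
    case False
    have "norm (G x) powr (p - 1) = norm (G x) powr (p - 2) * norm (G x) powr 1"
      by (subst powr_add[symmetric]) simp
    then show ?thesis
      using False by simp
  qed simp
qed (use p in auto)

lemma weak_gradient_affine:
  assumes wg: "weak_gradient (ball 0 1) u G" and cu: "continuous_on (ball 0 1) u"
    and ub: "\<And>x. x \<in> ball 0 1 \<Longrightarrow> \<bar>u x\<bar> \<le> M"
  shows "weak_gradient (ball 0 1) (\<lambda>x. a * (u x - c)) (\<lambda>x. a *\<^sub>R G x)"
  unfolding weak_gradient_def
proof (intro allI impI)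
  fix \<psi> D\<psi> i
  assume T: "test_fun (ball 0 1) \<psi> D\<psi>"
  obtain N where N: "\<And>x. norm (D\<psi> x) \<le> N" and cD: "continuous_on UNIV D\<psi>"
    using test_fun_bounded[OF T] by metis
  have D_bound: "\<bar>D\<psi> x $ i\<bar> \<le> N" for x
    using component_le_norm_cart[of "D\<psi> x" i] N[of x] by linarith
  have "(\<lambda>x. u x * D\<psi> x $ i) absolutely_integrable_on ball 0 1"
  proof (rule absolutely_integrable_on_bounded_continuous[where M="M * N"])
    show "continuous_on (ball 0 1) (\<lambda>x. u x * D\<psi> x $ i)"
      by (intro continuous_intros cu continuous_on_subset[OF cD]) simp
    show "\<bar>u x * D\<psi> x $ i\<bar> \<le> M * N" if "x \<in> ball 0 1" for x
      unfolding abs_mult using ub[OF that] D_bound[of x] by (intro mult_mono) auto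
  qed simp
  then have i1: "(\<lambda>x. u x * D\<psi> x $ i) integrable_on ball 0 1"
    by (simp add: absolutely_integrable_on_def)
  have "(\<lambda>x. D\<psi> x $ i) absolutely_integrable_on ball 0 1"
    using D_bound
    by (intro absolutely_integrable_on_bounded_continuous[where M=N] continuous_intros
          continuous_on_subset[OF cD]) auto
  then have i2: "(\<lambda>x. D\<psi> x $ i) integrable_on ball 0 1"
    by (simp add: absolutely_integrable_on_def)
  have "integral (ball 0 1) (\<lambda>x. a * (u x - c) * D\<psi> x $ i)
      = integral (ball 0 1) (\<lambda>x. a * (u x * D\<psi> x $ i) - a * c * D\<psi> x $ i)"
    by (intro integral_cong) (simp add: algebra_simps)
  also have "\<dots> = a * integral (ball 0 1) (\<lambda>x. u x * D\<psi> x $ i) - a * c * integral (ball 0 1) (\<lambda>x. D\<psi> x $ i)"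
    by (simp add: integral_diff[OF integrable_on_mult_right[OF i1] integrable_on_mult_right[OF i2]])
  also have "\<dots> = - (a * integral (ball 0 1) (\<lambda>x. G x $ i * \<psi> x))"
    using wg T test_fun_integral_partial_eq_0[OF T] unfolding weak_gradient_def by simp
  finally show "integral (ball 0 1) (\<lambda>x. a * (u x - c) * D\<psi> x $ i)
      = - integral (ball 0 1) (\<lambda>x. (a *\<^sub>R G x) $ i * \<psi> x)"
    by (simp add: mult.assoc)
qed

lemma weak_gradient_dilate:
  assumes wg: "weak_gradient (ball 0 1) u G" and cu: "continuous_on (ball 0 1) u"
    and ub: "\<And>x. x \<in> ball 0 1 \<Longrightarrow> \<bar>u x\<bar> \<le> M" and GA: "G absolutely_integrable_on ball 0 1"
    and s: "0 < s" "s \<le> 1"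
  shows "weak_gradient (ball 0 1) (\<lambda>x. u (s *\<^sub>R x)) (\<lambda>x. s *\<^sub>R G (s *\<^sub>R x))"
  unfolding weak_gradient_def
proof (intro allI impI)
  fix \<psi> D\<psi> i
  assume T: "test_fun (ball 0 1) \<psi> D\<psi>"
  define \<phi> where "\<phi> y = \<psi> (y /\<^sub>R s)" for y
  define D\<phi> where "D\<phi> y = D\<psi> (y /\<^sub>R s) /\<^sub>R s" for y
  have TF: "test_fun (ball 0 1) \<phi> D\<phi>"
    unfolding \<phi>_def[abs_def] D\<phi>_def[abs_def] by (rule test_fun_dilate[OF T s])
  obtain N where N: "\<And>x. norm (D\<phi> x) \<le> N" and cD\<phi>: "continuous_on UNIV D\<phi>"
    using test_fun_bounded[OF TF] by metis
  have out: "\<phi> y = 0 \<and> D\<phi> y = 0" if "s \<le> norm y" for y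
    using test_fun_dilate_vanishes_outside[OF T s(1) that] by (simp add: \<phi>_def D\<phi>_def)
  define h1 where "h1 y = u y * D\<phi> y $ i" for y
  define h2 where "h2 y = G y $ i * \<phi> y" for y
  have h1A: "h1 absolutely_integrable_on ball 0 1"
    unfolding h1_def
  proof (rule absolutely_integrable_on_bounded_continuous[where M="M * N"])
    show "continuous_on (ball 0 1) (\<lambda>y. u y * D\<phi> y $ i)"
      by (intro continuous_intros cu continuous_on_subset[OF cD\<phi>]) simp
    show "\<bar>u y * D\<phi> y $ i\<bar> \<le> M * N" if "y \<in> ball 0 1" for y
      unfolding abs_mult using ub[OF that] component_le_norm_cart[of "D\<phi> y" i] N[of y]
      by (intro mult_mono) auto
  qed simp
  have "(\<lambda>y. \<phi> y * (G y \<bullet> axis i 1)) absolutely_integrable_on ball 0 1"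
    by (rule test_fun_mult_absolutely_integrable[OF TF absolutely_integrable_component[OF GA]]) simp
  moreover have "v \<bullet> axis i 1 = v $ i" for v :: "real^2"
    by (simp add: inner_axis)
  ultimately have h2A: "h2 absolutely_integrable_on ball 0 1"
    by (simp add: h2_def[abs_def] mult.commute)
  have "integral (ball 0 1) (\<lambda>x. u (s *\<^sub>R x) * D\<psi> x $ i) = integral (ball 0 1) (\<lambda>x. s * h1 (s *\<^sub>R x))"
    using s by (intro integral_cong) (simp add: h1_def D\<phi>_def)
  also have "\<dots> = s * (integral (ball 0 1) h1 / s\<^sup>2)"
    using integral_dilate_ball_vanishing[OF s h1A] out by (simp add: h1_def)
  also have "integral (ball 0 1) h1 = - integral (ball 0 1) h2"
    using wg TF unfolding weak_gradient_def h1_def h2_def by blast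
  also have "integral (ball 0 1) h2 = s\<^sup>2 * integral (ball 0 1) (\<lambda>x. h2 (s *\<^sub>R x))"
    using integral_dilate_ball_vanishing[OF s h2A] out s by (simp add: h2_def)
  also have "integral (ball 0 1) (\<lambda>x. h2 (s *\<^sub>R x)) = integral (ball 0 1) (\<lambda>x. G (s *\<^sub>R x) $ i * \<psi> x)"
    using s by (simp add: h2_def \<phi>_def)
  finally show "integral (ball 0 1) (\<lambda>x. u (s *\<^sub>R x) * D\<psi> x $ i)
      = - integral (ball 0 1) (\<lambda>x. (s *\<^sub>R G (s *\<^sub>R x)) $ i * \<psi> x)"
    using s by (simp add: power2_eq_square mult.assoc)
qed

lemma plap_flux_scaleR:
  fixes v w :: "'a::real_inner"
  assumes "0 < a"
  shows "norm (a *\<^sub>R v) powr (p - 2) * ((a *\<^sub>R v) \<bullet> w) = a powr (p - 1) * (norm v powr (p - 2) * (v \<bullet> w))"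
proof -
  have "a powr (p - 1) = a powr (p - 2) * a powr 1"
    by (subst powr_add[symmetric]) simp
  then have "a powr (p - 1) = a powr (p - 2) * a"
    using assms by simp
  then show ?thesis
    using assms by (simp add: powr_mult)
qed

lemma weak_plap_eq_scale:
  assumes "weak_plap_eq p U G f" "0 < a"
  shows "weak_plap_eq p U (\<lambda>x. a *\<^sub>R G x) (\<lambda>x. a powr (p - 1) * f x)"
  using assms unfolding weak_plap_eq_def plap_flux_scaleR[OF assms(2)]
  by (simp add: mult.assoc integral_mult_right)

lemma weak_plap_eq_dilate:
  assumes eq: "weak_plap_eq p (ball 0 1) G f"
    and FA: "(\<lambda>x. norm (G x) powr (p - 2) *\<^sub>R G x) absolutely_integrable_on ball 0 1"
    and fA: "f absolutely_integrable_on ball 0 1" and s: "0 < s" "s \<le> 1"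
  shows "weak_plap_eq p (ball 0 1) (\<lambda>x. s *\<^sub>R G (s *\<^sub>R x)) (\<lambda>x. s powr p * f (s *\<^sub>R x))"
  unfolding weak_plap_eq_def
proof (intro allI impI)
  fix \<psi> D\<psi>
  assume T: "test_fun (ball 0 1) \<psi> D\<psi>"
  define \<phi> where "\<phi> y = \<psi> (y /\<^sub>R s)" for y
  define D\<phi> where "D\<phi> y = D\<psi> (y /\<^sub>R s) /\<^sub>R s" for y
  have TF: "test_fun (ball 0 1) \<phi> D\<phi>"
    unfolding \<phi>_def[abs_def] D\<phi>_def[abs_def] by (rule test_fun_dilate[OF T s])
  have out: "\<phi> y = 0 \<and> D\<phi> y = 0" if "s \<le> norm y" for y
    using test_fun_dilate_vanishes_outside[OF T s(1) that] by (simp add: \<phi>_def D\<phi>_def)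
  define H where "H y = D\<phi> y \<bullet> (norm (G y) powr (p - 2) *\<^sub>R G y)" for y
  define h where "h y = \<phi> y * f y" for y
  have HA: "H absolutely_integrable_on ball 0 1"
    unfolding H_def[abs_def] by (rule test_fun_gradient_inner_absolutely_integrable[OF TF FA]) simp
  have hA: "h absolutely_integrable_on ball 0 1"
    unfolding h_def[abs_def] by (rule test_fun_mult_absolutely_integrable[OF TF fA]) simp
  have "integral (ball 0 1) (\<lambda>x. norm (s *\<^sub>R G (s *\<^sub>R x)) powr (p - 2) * (s *\<^sub>R G (s *\<^sub>R x) \<bullet> D\<psi> x))
      = integral (ball 0 1) (\<lambda>x. s powr p * H (s *\<^sub>R x))"
  proof (intro integral_cong)
    fix x
    have "s powr p = s powr (p - 1) * s powr 1"
      by (subst powr_add[symmetric]) simp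
    moreover have "D\<psi> x = s *\<^sub>R D\<phi> (s *\<^sub>R x)"
      using s by (simp add: D\<phi>_def)
    ultimately show "norm (s *\<^sub>R G (s *\<^sub>R x)) powr (p - 2) * (s *\<^sub>R G (s *\<^sub>R x) \<bullet> D\<psi> x)
        = s powr p * H (s *\<^sub>R x)"
      unfolding plap_flux_scaleR[OF s(1)] using s by (simp add: H_def inner_commute)
  qed
  also have "\<dots> = s powr p * (integral (ball 0 1) H / s\<^sup>2)"
    using integral_dilate_ball_vanishing[OF s HA] out by (simp add: H_def)
  also have "integral (ball 0 1) H = integral (ball 0 1) h"
    using eq TF unfolding weak_plap_eq_def H_def h_def by (simp add: inner_commute mult.commute)
  also have "integral (ball 0 1) h = s\<^sup>2 * integral (ball 0 1) (\<lambda>x. h (s *\<^sub>R x))"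
    using integral_dilate_ball_vanishing[OF s hA] out s by (simp add: h_def)
  also have "integral (ball 0 1) (\<lambda>x. h (s *\<^sub>R x)) = integral (ball 0 1) (\<lambda>x. f (s *\<^sub>R x) * \<psi> x)"
    using s by (simp add: h_def \<phi>_def mult.commute)
  finally show "integral (ball 0 1) (\<lambda>x. norm (s *\<^sub>R G (s *\<^sub>R x)) powr (p - 2) * (s *\<^sub>R G (s *\<^sub>R x) \<bullet> D\<psi> x))
      = integral (ball 0 1) (\<lambda>x. s powr p * f (s *\<^sub>R x) * \<psi> x)"
    using s by (simp add: mult.assoc)
qed

lemma weak_sol_plap_affine:
  assumes ws: "weak_sol_plap p (ball 0 1) u G f" and cu: "continuous_on (ball 0 1) u"
    and ub: "\<And>x. x \<in> ball 0 1 \<Longrightarrow> \<bar>u x\<bar> \<le> M" and a: "0 < a" and p: "0 < p"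
  shows "weak_sol_plap p (ball 0 1) (\<lambda>x. a * (u x - c)) (\<lambda>x. a *\<^sub>R G x) (\<lambda>x. a powr (p - 1) * f x)"
proof -
  from ws have S: "sobolev_W1p p (ball 0 1) u G" and E: "weak_plap_eq p (ball 0 1) G f"
    by (simp_all add: weak_sol_plap_iff)
  have "\<bar>a * (u x - c)\<bar> \<le> a * (M + \<bar>c\<bar>)" if "x \<in> ball 0 1" for x
    using ub[OF that] a by (simp add: abs_mult)
  moreover have "(\<lambda>x. a *\<^sub>R G x) measurable_on ball 0 1"
    using S unfolding sobolev_W1p_def by (blast intro: measurable_on_scaleR_const)
  moreover have "(\<lambda>x. norm (a *\<^sub>R G x) powr p) integrable_on ball 0 1"
    using S a integrable_on_mult_right[of _ _ "a powr p"] unfolding sobolev_W1p_def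
    by (simp add: powr_mult)
  moreover have "weak_gradient (ball 0 1) (\<lambda>x. a * (u x - c)) (\<lambda>x. a *\<^sub>R G x)"
    using S cu ub unfolding sobolev_W1p_def by (blast intro: weak_gradient_affine)
  ultimately have "sobolev_W1p p (ball 0 1) (\<lambda>x. a * (u x - c)) (\<lambda>x. a *\<^sub>R G x)"
    using cu p by (intro sobolev_W1p_of_continuous_bounded) (auto intro!: continuous_intros)
  then show ?thesis
    using weak_plap_eq_scale[OF E a] by (simp add: weak_sol_plap_iff)
qed

lemma weak_sol_plap_dilate:
  assumes ws: "weak_sol_plap p (ball 0 1) u G f" and cu: "continuous_on (ball 0 1) u"
    and ub: "\<And>x. x \<in> ball 0 1 \<Longrightarrow> \<bar>u x\<bar> \<le> M" and fA: "f absolutely_integrable_on ball 0 1"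
    and p: "1 \<le> p" and s: "0 < s" "s \<le> 1"
  shows "weak_sol_plap p (ball 0 1) (\<lambda>x. u (s *\<^sub>R x)) (\<lambda>x. s *\<^sub>R G (s *\<^sub>R x)) (\<lambda>x. s powr p * f (s *\<^sub>R x))"
proof -
  from ws have S: "sobolev_W1p p (ball 0 1) u G" and E: "weak_plap_eq p (ball 0 1) G f"
    by (simp_all add: weak_sol_plap_iff)
  have sub: "ball (0::real^2) s \<subseteq> ball 0 1"
    using s by (intro subset_ball)
  have GA: "G absolutely_integrable_on ball 0 1"
    using S p by (intro sobolev_W1p_gradient_powr_absolutely_integrable[where q=1]) (auto simp: sobolev_W1p_def)
  then have "(\<lambda>x. G (s *\<^sub>R x)) absolutely_integrable_on ball 0 1"
    using set_integrable_subset[OF GA _ sub] absolutely_integrable_dilate_ball(1)[OF s(1)] by simp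
  then have "(\<lambda>x. s *\<^sub>R G (s *\<^sub>R x)) measurable_on ball 0 1"
    by (intro measurable_on_scaleR_const absolutely_integrable_imp_measurable_on) auto
  moreover have "(\<lambda>x. norm (s *\<^sub>R G (s *\<^sub>R x)) powr p) integrable_on ball 0 1"
  proof -
    have "(\<lambda>x. norm (G x) powr p) absolutely_integrable_on ball 0 1"
      using S by (intro nonnegative_absolutely_integrable_1) (auto simp: sobolev_W1p_def)
    then have "(\<lambda>x. norm (G x) powr p) absolutely_integrable_on ball 0 s"
      by (rule set_integrable_subset[OF _ _ sub]) simp
    from absolutely_integrable_dilate_ball_real(1)[OF s(1) this]
    have "(\<lambda>x. norm (G (s *\<^sub>R x)) powr p) integrable_on ball 0 1"
      unfolding absolutely_integrable_on_def by blast
    then show ?thesis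
      using s integrable_on_mult_right[of _ _ "s powr p"] by (simp add: powr_mult)
  qed
  moreover have "weak_gradient (ball 0 1) (\<lambda>x. u (s *\<^sub>R x)) (\<lambda>x. s *\<^sub>R G (s *\<^sub>R x))"
    using S cu ub GA s unfolding sobolev_W1p_def by (blast intro: weak_gradient_dilate)
  moreover have "continuous_on (ball 0 1) (\<lambda>x. u (s *\<^sub>R x))"
    using s by (intro continuous_on_compose2[OF cu] continuous_intros) (auto intro: scaleR_mem_ball)
  ultimately have "sobolev_W1p p (ball 0 1) (\<lambda>x. u (s *\<^sub>R x)) (\<lambda>x. s *\<^sub>R G (s *\<^sub>R x))"
    using ub[OF scaleR_mem_ball] s p by (intro sobolev_W1p_of_continuous_bounded[where M=M]) auto
  moreover have "weak_plap_eq p (ball 0 1) (\<lambda>x. s *\<^sub>R G (s *\<^sub>R x)) (\<lambda>x. s powr p * f (s *\<^sub>R x))"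
    by (rule weak_plap_eq_dilate[OF E sobolev_W1p_flux_absolutely_integrable[OF S p] fA s])
  ultimately show ?thesis
    by (simp add: weak_sol_plap_iff)
qed

lemma weak_sol_plap_rescale:
  fixes c :: real
  assumes ws: "weak_sol_plap p (ball 0 1) u G f" and cu: "continuous_on (ball 0 1) u"
    and ub: "\<And>x. x \<in> ball 0 1 \<Longrightarrow> \<bar>u x\<bar> \<le> 1" and fb: "Linf_bound (ball 0 1) f \<delta>"
    and p: "1 \<le> p" and s: "0 < s" "s \<le> 1" and a: "0 < a" and k: "a powr (p - 1) * s powr p \<le> 1"
  defines "v \<equiv> \<lambda>x. a * (u (s *\<^sub>R x) - c)"
    and "fv \<equiv> \<lambda>x. a powr (p - 1) * (s powr p * f (s *\<^sub>R x))"
  shows "weak_sol_plap p (ball 0 1) v (\<lambda>x. a *\<^sub>R (s *\<^sub>R G (s *\<^sub>R x))) fv"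
    and "continuous_on (ball 0 1) v"
    and "Linf_bound (ball 0 1) fv \<delta>"
proof -
  have cus: "continuous_on (ball 0 1) (\<lambda>x. u (s *\<^sub>R x))"
    using s by (intro continuous_on_compose2[OF cu] continuous_intros) (auto intro: scaleR_mem_ball)
  have fA: "f absolutely_integrable_on ball 0 1"
    by (rule Linf_bound_absolutely_integrable[OF fb]) simp
  show "weak_sol_plap p (ball 0 1) v (\<lambda>x. a *\<^sub>R (s *\<^sub>R G (s *\<^sub>R x))) fv"
    unfolding v_def fv_def using p a ub[OF scaleR_mem_ball] s
    by (intro weak_sol_plap_affine[OF weak_sol_plap_dilate[OF ws cu ub fA p s] cus, where M=1]) auto
  show "continuous_on (ball 0 1) v"
    unfolding v_def by (intro continuous_intros cus)
  have "\<bar>a powr (p - 1) * s powr p\<bar> \<le> 1"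
    using k by simp
  from Linf_bound_dilate_mult[OF fb s this]
  show "Linf_bound (ball 0 1) fv \<delta>"
    unfolding fv_def by (simp add: mult.assoc)
qed

section \<open>Iterating Lemma 4.1\<close>

lemma rescaling_factor_le_1:
  fixes s N p :: real
  assumes p: "1 < p" and s: "0 < s" and N: "s powr (p / (p - 1)) \<le> N"
  shows "(1 / N) powr (p - 1) * s powr p \<le> 1"
proof -
  have N0: "0 < N"
    using s N powr_gt_zero[of s "p / (p - 1)"] by linarith
  have "s powr p = (s powr (p / (p - 1))) powr (p - 1)"
    using p by (simp add: powr_powr)
  also have "\<dots> \<le> N powr (p - 1)"
    using p N by (intro powr_mono2) auto
  finally have "(1 / N) powr (p - 1) * s powr p \<le> (1 / N) powr (p - 1) * N powr (p - 1)"
    by (intro mult_left_mono) auto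
  also have "\<dots> = 1"
    using N0 by (simp add: powr_divide)
  finally show ?thesis .
qed

lemma has_derivative_affine_dilate:
  assumes "(u has_derivative (\<lambda>h. g \<bullet> h)) (at 0)"
  shows "((\<lambda>x. a * (u (s *\<^sub>R x) - c)) has_derivative (\<lambda>h. ((a * s) *\<^sub>R g) \<bullet> h)) (at 0)"
proof -
  have "(u has_derivative (\<lambda>h. g \<bullet> h)) (at (s *\<^sub>R 0))"
    using assms by simp
  from has_derivative_compose[OF has_derivative_scaleR_right[OF has_derivative_ident] this]
  have "((\<lambda>x. u (s *\<^sub>R x)) has_derivative (\<lambda>h. g \<bullet> (s *\<^sub>R h))) (at 0)" .
  then have "((\<lambda>x. a * (u (s *\<^sub>R x) - c)) has_derivative (\<lambda>h. a * (g \<bullet> (s *\<^sub>R h) - 0))) (at 0)"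
    by (intro derivative_intros)
  moreover have "(\<lambda>h. a * (g \<bullet> (s *\<^sub>R h) - 0)) = (\<lambda>h. ((a * s) *\<^sub>R g) \<bullet> h)"
    by (simp add: mult.assoc)
  ultimately show ?thesis
    by simp
qed

lemma lemma41_prop_rescaled:
  assumes p: "1 < p" and L41: "lemma41_prop p lam \<delta>"
    and ws: "weak_sol_plap p (ball 0 1) u G f" and cu: "continuous_on (ball 0 1) u"
    and ub: "\<forall>x\<in>ball 0 1. \<bar>u x\<bar> \<le> 1" and fb: "Linf_bound (ball 0 1) f \<delta>"
    and ud: "(u has_derivative (\<lambda>h. g0 \<bullet> h)) (at 0)"
    and s: "0 < s" "s \<le> 1" and N: "s powr (p / (p - 1)) \<le> N"
    and osc: "\<And>y. y \<in> ball 0 s \<Longrightarrow> \<bar>u y - u 0\<bar> \<le> N"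
    and z: "z \<in> ball 0 lam"
  shows "\<bar>u (s *\<^sub>R z) - u 0 - s * (g0 \<bullet> z)\<bar> \<le> N * lam powr (p / (p - 1))"
proof -
  have N0: "0 < N"
    using s N powr_gt_zero[of s "p / (p - 1)"] by linarith
  define a where "a = 1 / N"
  have a: "0 < a" "a * N = 1"
    using N0 by (simp_all add: a_def)
  define v where "v x = a * (u (s *\<^sub>R x) - u 0)" for x
  have k: "a powr (p - 1) * s powr p \<le> 1"
    unfolding a_def by (rule rescaling_factor_le_1[OF p s(1) N])
  have ub': "\<And>x. x \<in> ball 0 1 \<Longrightarrow> \<bar>u x\<bar> \<le> 1"
    using ub by blast
  note rescaled = weak_sol_plap_rescale[OF ws cu ub' fb _ s a(1) k]
  have "weak_sol_plap p (ball 0 1) v (\<lambda>x. a *\<^sub>R (s *\<^sub>R G (s *\<^sub>R x)))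
        (\<lambda>x. a powr (p - 1) * (s powr p * f (s *\<^sub>R x)))" "continuous_on (ball 0 1) v"
    unfolding v_def[abs_def] using rescaled(1,2) p by auto
  moreover have "Linf_bound (ball 0 1) (\<lambda>x. a powr (p - 1) * (s powr p * f (s *\<^sub>R x))) \<delta>"
    using rescaled(3) p by auto
  moreover have "\<bar>v x\<bar> \<le> 1" if "x \<in> ball 0 1" for x
  proof -
    have "s *\<^sub>R x \<in> ball 0 s"
      using that s by (simp add: mult_strict_left_mono[of _ 1, simplified])
    then have "a * \<bar>u (s *\<^sub>R x) - u 0\<bar> \<le> a * N"
      using osc a(1) by (intro mult_left_mono) auto
    then show ?thesis
      using a by (simp add: v_def abs_mult)
  qed
  moreover have "(v has_derivative (\<lambda>h. ((a * s) *\<^sub>R g0) \<bullet> h)) (at 0)"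
    unfolding v_def[abs_def] by (rule has_derivative_affine_dilate[OF ud])
  ultimately have "\<bar>v z - v 0 - ((a * s) *\<^sub>R g0) \<bullet> z\<bar> \<le> lam powr (p / (p - 1))"
    using L41 z unfolding lemma41_prop_def by blast
  then have "\<bar>a * (u (s *\<^sub>R z) - u 0 - s * (g0 \<bullet> z))\<bar> \<le> lam powr (p / (p - 1))"
    by (simp add: v_def algebra_simps)
  then have "a * \<bar>u (s *\<^sub>R z) - u 0 - s * (g0 \<bullet> z)\<bar> \<le> a * (N * lam powr (p / (p - 1)))"
    using a by (simp add: abs_mult mult.assoc[symmetric])
  then show ?thesis
    using a(1) by simp
qed

lemma oscillation_step:
  assumes p: "1 < p" and L41: "lemma41_prop p lam \<delta>"
    and ws: "weak_sol_plap p (ball 0 1) u G f" and cu: "continuous_on (ball 0 1) u"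
    and ub: "\<forall>x\<in>ball 0 1. \<bar>u x\<bar> \<le> 1" and fb: "Linf_bound (ball 0 1) f \<delta>"
    and ud: "(u has_derivative (\<lambda>h. g0 \<bullet> h)) (at 0)"
    and s: "0 < s" "s \<le> 1" and N: "s powr (p / (p - 1)) \<le> N"
    and osc: "\<And>y. y \<in> ball 0 s \<Longrightarrow> \<bar>u y - u 0\<bar> \<le> N"
    and y: "y \<in> ball 0 (s * lam)"
  shows "\<bar>u y - u 0\<bar> \<le> s * lam * norm g0 + N * lam powr (p / (p - 1))"
proof -
  define z where "z = y /\<^sub>R s"
  have z: "z \<in> ball 0 lam" "s *\<^sub>R z = y"
    using y s by (auto simp: z_def field_simps)
  have "\<bar>g0 \<bullet> z\<bar> \<le> norm g0 * lam"
    using Cauchy_Schwarz_ineq2[of g0 z] mult_left_mono[of "norm z" lam "norm g0"] z(1) by simp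
  then have "\<bar>s * (g0 \<bullet> z)\<bar> \<le> s * lam * norm g0"
    using s by (simp add: abs_mult mult_left_mono mult_ac)
  with lemma41_prop_rescaled[OF p L41 ws cu ub fb ud s N osc z(1)] show ?thesis
    unfolding z(2) by linarith
qed

lemma power_powr_swap:
  fixes x :: real
  assumes "0 < x"
  shows "(x ^ k) powr b = (x powr b) ^ k"
  using assms by (simp add: powr_realpow[symmetric] powr_powr_swap)

lemma powr_conjugate_exponent_less:
  fixes lam p :: real
  assumes "0 < lam" "lam < 1" "1 < p"
  shows "lam powr (p / (p - 1)) < lam"
  using powr_less_mono'[OF assms(1,2), of 1 "p / (p - 1)"] assms by simp

lemma oscillation_decay:
  assumes p: "1 < p" and lam: "0 < lam" "lam < 1" and L41: "lemma41_prop p lam \<delta>"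
    and ws: "weak_sol_plap p (ball 0 1) u G f" and cu: "continuous_on (ball 0 1) u"
    and ub: "\<forall>x\<in>ball 0 1. \<bar>u x\<bar> \<le> 1" and fb: "Linf_bound (ball 0 1) f \<delta>"
    and ud: "(u has_derivative (\<lambda>h. g0 \<bullet> h)) (at 0)"
  defines "L \<equiv> lam powr (p / (p - 1))"
  defines "B \<equiv> lam / (lam - L)"
  shows "y \<in> ball 0 (lam ^ k) \<Longrightarrow> \<bar>u y - u 0\<bar> \<le> 2 * L ^ k + B * norm g0 * lam ^ k"
proof -
  have "L < lam"
    unfolding L_def by (rule powr_conjugate_exponent_less[OF lam p])
  then have B: "0 < B" "lam + B * L = B * lam"
    using lam by (simp_all add: B_def field_simps)
  show "y \<in> ball 0 (lam ^ k) \<Longrightarrow> \<bar>u y - u 0\<bar> \<le> 2 * L ^ k + B * norm g0 * lam ^ k"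
  proof (induction k arbitrary: y)
    case 0
    then have "\<bar>u y\<bar> \<le> 1" "\<bar>u 0\<bar> \<le> 1"
      using ub by auto
    moreover have "0 \<le> B * norm g0"
      using B(1) by simp
    ultimately show ?case
      using abs_triangle_ineq4[of "u y" "u 0"] by simp
  next
    case (Suc k)
    define s where "s = lam ^ k"
    have s: "0 < s" "s \<le> 1"
      using lam by (simp_all add: s_def power_le_one)
    have "s powr (p / (p - 1)) = L ^ k"
      unfolding s_def L_def by (rule power_powr_swap[OF lam(1)])
    moreover have "0 \<le> L ^ k" "0 \<le> B * norm g0 * s"
      using B(1) s(1) by (simp_all add: L_def)
    ultimately have N: "s powr (p / (p - 1)) \<le> 2 * L ^ k + B * norm g0 * s"
      by linarith
    have "\<bar>u y - u 0\<bar> \<le> s * lam * norm g0 + (2 * L ^ k + B * norm g0 * s) * L"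
      using oscillation_step[OF p L41 ws cu ub fb ud s N] Suc by (simp add: s_def L_def mult.commute)
    also have "\<dots> = 2 * L ^ Suc k + norm g0 * s * (lam + B * L)"
      by (simp add: algebra_simps)
    also have "\<dots> = 2 * L ^ Suc k + B * norm g0 * lam ^ Suc k"
      unfolding B(2) by (simp add: s_def algebra_simps)
    finally show ?case .
  qed
qed

lemma exists_geometric_scale:
  fixes lam r :: real
  assumes lam: "0 < lam" "lam < 1" and r: "0 < r" "r \<le> 1"
  shows "\<exists>k. lam ^ Suc k < r \<and> r \<le> lam ^ k"
proof -
  obtain n where "lam ^ n < r"
    using real_arch_pow_inv[OF r(1) lam(2)] by blast
  define m where "m = (LEAST n. lam ^ n < r)"
  have m: "lam ^ m < r"
    unfolding m_def by (rule LeastI) fact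
  then have "m \<noteq> 0"
    using r(2) by (metis not_le power_0)
  then obtain k where k: "m = Suc k"
    using not0_implies_Suc by blast
  have "r \<le> lam ^ k"
    using not_less_Least[of k "\<lambda>n. lam ^ n < r"] k by (simp add: m_def not_less)
  then show ?thesis
    using m k by blast
qed

lemma bound_at_radius_of_geometric_decay:
  fixes lam \<beta> A B r \<rho> d :: real
  assumes lam: "0 < lam" "lam < 1" and \<beta>: "0 \<le> \<beta>" and AB: "0 \<le> A" "0 \<le> B"
    and r: "0 < r" "r \<le> 1" "\<rho> < r"
    and decay: "\<And>k. \<rho> < lam ^ k \<Longrightarrow> d \<le> A * (lam powr \<beta>) ^ k + B * lam ^ k"
  shows "d \<le> A / lam powr \<beta> * r powr \<beta> + B / lam * r"
proof -
  obtain k where k: "lam ^ Suc k < r" "r \<le> lam ^ k"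
    using exists_geometric_scale[OF lam r(1,2)] by blast
  have lk: "lam ^ k \<le> r / lam"
    using k(1) lam by (simp add: field_simps)
  have "(lam powr \<beta>) ^ k = (lam ^ k) powr \<beta>"
    by (rule power_powr_swap[OF lam(1), symmetric])
  also have "\<dots> \<le> (r / lam) powr \<beta>"
    using lk lam \<beta> by (intro powr_mono2) auto
  also have "\<dots> = r powr \<beta> / lam powr \<beta>"
    using lam r by (simp add: powr_divide)
  finally have Lk: "(lam powr \<beta>) ^ k \<le> r powr \<beta> / lam powr \<beta>" .
  have "d \<le> A * (lam powr \<beta>) ^ k + B * lam ^ k"
    using decay k(2) r(3) by simp
  also have "\<dots> \<le> A * (r powr \<beta> / lam powr \<beta>) + B * (r / lam)"
    using Lk lk AB by (intro add_mono mult_left_mono) auto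
  finally show ?thesis
    by simp
qed

lemma powr_conjugate_exponents:
  fixes r p :: real
  assumes "0 < r" "1 < p"
  shows "r powr (p / (p - 1)) * r powr (1 / (1 - p)) = r"
proof -
  have "1 / (1 - p) = - (1 / (p - 1))"
    by (simp flip: divide_minus_right)
  then have "p / (p - 1) + 1 / (1 - p) = p / (p - 1) - 1 / (p - 1)"
    by simp
  also have "\<dots> = (p - 1) / (p - 1)"
    by (rule diff_divide_distrib[symmetric])
  finally have "p / (p - 1) + 1 / (1 - p) = 1"
    using assms(2) by simp
  then show ?thesis
    using assms(1) by (simp flip: powr_add)
qed

definition oscillation_const :: "real \<Rightarrow> real \<Rightarrow> real" where
  "oscillation_const p lam = 2 / lam powr (p / (p - 1)) + 1 / (lam - lam powr (p / (p - 1))) + 1"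

lemma oscillation_const_gt_1:
  assumes "0 < lam" "lam < 1" "1 < p"
  shows "1 < oscillation_const p lam"
  using powr_conjugate_exponent_less[OF assms] assms(1)
  by (simp add: oscillation_const_def add_pos_pos)

lemma oscillation_power_bound:
  assumes p: "1 < p" and lam: "0 < lam" "lam < 1" and L41: "lemma41_prop p lam \<delta>"
    and ws: "weak_sol_plap p (ball 0 1) u G f" and cu: "continuous_on (ball 0 1) u"
    and ub: "\<forall>x\<in>ball 0 1. \<bar>u x\<bar> \<le> 1" and fb: "Linf_bound (ball 0 1) f \<delta>"
    and ud: "(u has_derivative (\<lambda>h. g0 \<bullet> h)) (at 0)"
    and r: "0 < r" "r \<le> 1" and x: "x \<in> ball 0 r"
  shows "\<bar>u x - u 0\<bar> \<le> oscillation_const p lam * r powr (p / (p - 1)) * (1 + norm g0 * r powr (1 / (1 - p)))"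
proof -
  define L where "L = lam powr (p / (p - 1))"
  define C where "C = oscillation_const p lam"
  have L: "0 < L" "L < lam"
    using powr_conjugate_exponent_less[OF lam p] lam(1) by (simp_all add: L_def)
  have "\<bar>u x - u 0\<bar> \<le> 2 / L * r powr (p / (p - 1)) + lam / (lam - L) * norm g0 / lam * r"
    unfolding L_def using oscillation_decay[OF p lam L41 ws cu ub fb ud] L x r p
      divide_nonneg_pos[of "lam * norm g0" "lam - L"] lam
    by (intro bound_at_radius_of_geometric_decay[OF lam, where \<rho>="norm x"])
       (auto simp: L_def mult.assoc)
  also have "\<dots> = 2 / L * r powr (p / (p - 1)) + 1 / (lam - L) * (norm g0 * r)"
    using lam by simp
  also have "\<dots> \<le> C * r powr (p / (p - 1)) + C * (norm g0 * r)"
    using L lam r by (intro add_mono mult_right_mono) (auto simp: C_def L_def oscillation_const_def)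
  also have "\<dots> = C * r powr (p / (p - 1)) * (1 + norm g0 * r powr (1 / (1 - p)))"
    using powr_conjugate_exponents[of r p] r p by (simp add: algebra_simps)
  finally show ?thesis
    by (simp add: C_def)
qed

theorem theorem4p3:
  fixes p \<delta>0 :: real
  assumes "p > 2" and "\<delta>0 > 0"
    and "\<exists>lam0. 0 < lam0 \<and> lam0 < 1/2 \<and> lemma41_prop p lam0 \<delta>0"
  shows "\<exists>C r0. C > 1 \<and> 0 < r0 \<and> r0 \<le> 1 \<and>
    (\<forall>u G f g0.
        weak_sol_plap p (ball 0 1) u G f \<and> continuous_on (ball 0 1) u \<and>
        (\<forall>x\<in>ball 0 1. \<bar>u x\<bar> \<le> 1) \<and> Linf_bound (ball 0 1) f \<delta>0 \<and>
        (u has_derivative (\<lambda>h. g0 \<bullet> h)) (at 0)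
      \<longrightarrow> (\<forall>r. 0 < r \<and> r \<le> r0 \<longrightarrow>
            (\<forall>x\<in>ball 0 r. \<bar>u x - u 0\<bar> \<le>
               C * r powr (p / (p - 1)) * (1 + norm g0 * r powr (1 / (1 - p))))))"
proof -
  have p: "1 < p"
    using assms(1) by simp
  obtain lam where lam: "0 < lam" "lam < 1" and L41: "lemma41_prop p lam \<delta>0"
    using assms(3) by auto
  show ?thesis
    using oscillation_const_gt_1[OF lam p] oscillation_power_bound[OF p lam L41]
    by (intro exI[of _ "oscillation_const p lam"] exI[of _ 1]) auto
qed

end
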